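(* Let $k\ge d$. Let ${\mathbb S}=(\mathbf x_1,\dots,\mathbf x_{k-d})\sim D_{\mathcal X}^{k-d}$ and ${\mathbb S}_\circ=(\widetilde{\mathbf x}_1,\dots,\widetilde{\mathbf x}_d)\sim \mathrm{VS}_{D_{\mathcal X}}^d$ be independent, and let $\sigma$ be a uniformly random permutation of $\{1,\dots,k\}$, independent of both. Let $\widetilde{\mathbb S}\in(\mathbb R^d)^k$ be the $k$-tuple obtained by concatenating ${\mathbb S}$ and ${\mathbb S}_\circ$ and permuting the $k$ entries by $\sigma$. Then $\widetilde{\mathbb S}\sim \mathrm{VS}_{D_{\mathcal X}}^k$.
   Context: $D_{\mathcal X}$ is a probability distribution on $\mathbb R^d$ with $\mathbb E\|\mathbf x\|^2<\infty$ and $\boldsymbol\Sigma_{D_{\mathcal X}}:=\mathbb E[\mathbf x\mathbf x^\top]$ invertible. $D_{\mathcal X}^k$ denotes the law of $k$ i.i.d. draws from $D_{\mathcal X}$. For $k\ge d$, volume-rescaled sampling $\mathrm{VS}_{D_{\mathcal X}}^k$ is the probability measure on $(\mathbb R^d)^k$ defined for measurable $A\subseteq(\mathbb R^d)^k$ by $\mathrm{VS}_{D_{\mathcal X}}^k(A)=\dfrac{\mathbb E_{D_{\mathcal X}^k}\big[\mathbf 1_A\,\det\big(\sum_{i=1}^k\mathbf x_i\mathbf x_i^\top\big)\big]}{d!\binom{k}{d}\det(\boldsymbol\Sigma_{D_{\mathcal X}})}$. *)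

theory Defs
  imports "HOL-Probability.Probability"
begin

definition second_moment :: "(real^'d) measure \<Rightarrow> real^'d^'d" where
  "second_moment D = (\<chi> i j. integral\<^sup>L D (\<lambda>x. x$i * x$j))"

definition outer :: "real^'d \<Rightarrow> real^'d^'d" where
  "outer x = (\<chi> i j. x$i * x$j)"

definition iid :: "(real^'d) measure \<Rightarrow> nat \<Rightarrow> (nat \<Rightarrow> real^'d) measure" where
  "iid D k = PiM {..<k} (\<lambda>_. D)"

definition VS :: "(real^'d) measure \<Rightarrow> nat \<Rightarrow> (nat \<Rightarrow> real^'d) measure" where
  "VS D k = density (iid D k)
     (\<lambda>xs. ennreal (det (\<Sum>i<k. outer (xs i)) /
        (fact CARD('d) * real (k choose CARD('d)) * det (second_moment D))))"

definition unif_perm :: "nat \<Rightarrow> (nat \<Rightarrow> nat) measure" where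
  "unif_perm k = measure_pmf (pmf_of_set {\<sigma>. \<sigma> permutes {..<k}})"

text \<open>Concatenate S (length k-d) and S_o (length d), then permute entries by \<sigma>:
  the i-th entry of the result is the \<sigma>(i)-th entry of the concatenation.\<close>
definition concat_perm :: "nat \<Rightarrow> nat \<Rightarrow> (nat \<Rightarrow> real^'d) \<times> (nat \<Rightarrow> real^'d) \<times> (nat \<Rightarrow> nat)
    \<Rightarrow> (nat \<Rightarrow> real^'d)" where
  "concat_perm k m = (\<lambda>(S, So, \<sigma>).
     (\<lambda>i\<in>{..<k}. let j = \<sigma> i in if j < k - m then S j else So (j - (k - m))))"

end

theory Submission
  imports Defs
begin

text \<open>Condition on the shuffle \<open>\<sigma>\<close>. Concatenating and permuting only relabels independent
  coordinates, so given \<open>\<sigma>\<close> the output has density \<open>det (X\<^sub>T\<^sup>T X\<^sub>T) / (d! det \<Sigma>)\<close> with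
  respect to \<open>D\<^sup>k\<close>, where \<open>T = \<sigma>\<inverse>{k-d, \<dots>, k-1}\<close> is the set of positions that received
  \<open>S\<^sub>\<circ>\<close> and \<open>X\<^sub>T\<^sup>T X\<^sub>T\<close> (below: \<open>scatter T\<close>) is the Gram matrix of those rows. As \<open>\<sigma>\<close>
  ranges over all permutations, \<open>T\<close> ranges uniformly over the \<open>d\<close>-subsets of the \<open>k\<close> positions,
  and by Cauchy--Binet the sum of \<open>det (X\<^sub>T\<^sup>T X\<^sub>T)\<close> over all \<open>d\<close>-subsets is \<open>det (X\<^sup>T X)\<close>;
  so the averaged density is that of \<open>VS\<^sup>k\<close>.\<close>

definition scatter :: "'i set \<Rightarrow> ('i \<Rightarrow> real^'d) \<Rightarrow> real^'d^'d" where
  "scatter T w = (\<Sum>i\<in>T. outer (w i))"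

lemma det_sum_rows:
  fixes a :: "'n::finite \<Rightarrow> 'j \<Rightarrow> 'a::comm_ring_1^'n"
  assumes "finite S"
  shows "det (\<chi> i. \<Sum>j\<in>S. a i j) = (\<Sum>f\<in>UNIV \<rightarrow>\<^sub>E S. det (\<chi> i. a i (f i)))"
proof -
  have "det (\<chi> i. \<Sum>j\<in>S. a i j)
      = (\<Sum>p | p permutes UNIV. of_int (sign p) * (\<Sum>f\<in>UNIV \<rightarrow>\<^sub>E S. \<Prod>i\<in>UNIV. a i (f i) $ p i))"
    using assms by (simp add: det_def sum_component prod_sum_PiE)
  also have "\<dots> = (\<Sum>f\<in>UNIV \<rightarrow>\<^sub>E S. det (\<chi> i. a i (f i)))"
    by (simp add: det_def sum_distrib_left sum.swap[of _ "{p. p permutes UNIV}"])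
  finally show ?thesis .
qed

lemma det_scatter_eq_sum_inj:
  fixes w :: "'i \<Rightarrow> real^'d"
  assumes "finite T"
  shows "det (scatter T w)
    = (\<Sum>f | range f \<subseteq> T \<and> inj f. (\<Prod>r\<in>UNIV. w (f r) $ r) * det (\<chi> r. w (f r)))"
proof -
  have rows: "scatter T w = (\<chi> r. \<Sum>i\<in>T. (w i $ r) *s w i)"
    by (simp add: scatter_def outer_def vec_eq_iff sum_component)
  have funs: "UNIV \<rightarrow>\<^sub>E T = {f. range f \<subseteq> T}"
    by (auto simp: PiE_def Pi_def extensional_def)
  have "det (scatter T w) = (\<Sum>f | range f \<subseteq> T. (\<Prod>r\<in>UNIV. w (f r) $ r) * det (\<chi> r. w (f r)))"
    unfolding rows det_sum_rows[OF assms] funs by (simp add: det_rows_mul)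
  also have "\<dots> = (\<Sum>f | range f \<subseteq> T \<and> inj f. (\<Prod>r\<in>UNIV. w (f r) $ r) * det (\<chi> r. w (f r)))"
  proof (rule sum.mono_neutral_right)
    show "finite {f :: 'd \<Rightarrow> 'i. range f \<subseteq> T}"
      using finite_PiE[of "UNIV :: 'd set" "\<lambda>_. T"] assms by (simp add: funs)
    have "det (\<chi> r. w (f r)) = 0" if "\<not> inj f" for f :: "'d \<Rightarrow> 'i"
    proof -
      from that obtain r s where "r \<noteq> s" "f r = f s" unfolding inj_def by blast
      then show ?thesis by (intro det_identical_rows) (auto simp: row_def vec_eq_iff)
    qed
    then show "\<forall>f\<in>{f. range f \<subseteq> T} - {f. range f \<subseteq> T \<and> inj f}.
        (\<Prod>r\<in>UNIV. w (f r) $ r) * det (\<chi> r. w (f r)) = 0" by auto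
  qed auto
  finally show ?thesis .
qed

text \<open>An injective index map \<open>f\<close> into \<open>K\<close> contributes to exactly one \<open>d\<close>-subset,
  namely its range.\<close>
lemma cauchy_binet_scatter:
  fixes w :: "'i \<Rightarrow> real^'d"
  assumes K: "finite K"
  shows "(\<Sum>T | T \<subseteq> K \<and> card T = CARD('d). det (scatter T w)) = det (scatter K w)"
proof -
  let ?g = "\<lambda>f. (\<Prod>r\<in>UNIV. w (f r) $ r) * det (\<chi> r. w (f r))"
  let ?I = "\<lambda>T. {f :: 'd \<Rightarrow> 'i. range f \<subseteq> T \<and> inj f}"
  have fin: "finite (?I K)"
    by (rule finite_subset[of _ "UNIV \<rightarrow>\<^sub>E K"]) (auto simp: K finite_PiE)
  have "(\<Sum>T | T \<subseteq> K \<and> card T = CARD('d). det (scatter T w))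
      = (\<Sum>T | T \<subseteq> K \<and> card T = CARD('d). \<Sum>f\<in>{f\<in>?I K. range f = T}. ?g f)"
  proof (rule sum.cong[OF refl])
    fix T assume T: "T \<in> {T. T \<subseteq> K \<and> card T = CARD('d)}"
    then have "finite T" using K finite_subset by blast
    moreover have "range f = T" if "range f \<subseteq> T" "inj f" for f :: "'d \<Rightarrow> 'i"
      using that T \<open>finite T\<close> by (intro card_subset_eq) (auto simp: card_image)
    then have "?I T = {f\<in>?I K. range f = T}"
      using T by auto
    ultimately show "det (scatter T w) = (\<Sum>f\<in>{f\<in>?I K. range f = T}. ?g f)"
      by (simp add: det_scatter_eq_sum_inj)
  qed
  also have "\<dots> = (\<Sum>f\<in>?I K. ?g f)"
    by (rule sum.group[OF fin]) (auto simp: K card_image)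
  finally show ?thesis by (simp add: det_scatter_eq_sum_inj[OF K])
qed

lemma det_scatter_nonneg:
  fixes w :: "'i \<Rightarrow> real^'d"
  assumes "finite K"
  shows "det (scatter K w) \<ge> 0"
proof -
  have square: "det (scatter T w) \<ge> 0" if T: "finite T" "card T = CARD('d)" for T
  proof -
    obtain e where e: "bij_betw e (UNIV :: 'd set) T"
      using finite_same_card_bij[of "UNIV :: 'd set" T] T by auto
    define B :: "real^'d^'d" where "B = (\<chi> j. w (e j))"
    have "scatter T w = transpose B ** B"
      using sum.reindex_bij_betw[OF e, of "\<lambda>i. w i $ r * w i $ c" for r c]
      by (simp add: scatter_def outer_def vec_eq_iff sum_component B_def
          matrix_matrix_mult_def transpose_def)
    then show ?thesis by (simp add: det_mul det_transpose)
  qed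
  have "0 \<le> (\<Sum>T | T \<subseteq> K \<and> card T = CARD('d). det (scatter T w))"
    using assms by (intro sum_nonneg square) (auto intro: finite_subset)
  then show ?thesis by (simp add: cauchy_binet_scatter[OF assms])
qed

lemma exists_permutes_image:
  assumes K: "finite K" and AB: "A \<subseteq> K" "B \<subseteq> K" "card A = card B"
  obtains \<rho> where "\<rho> permutes K" "\<rho> ` A = B"
proof -
  have fin: "finite A" "finite B" "finite (K - A)" "finite (K - B)"
    using K AB finite_subset by auto
  obtain h1 where h1: "bij_betw h1 A B"
    using finite_same_card_bij fin AB by metis
  have "card (K - A) = card (K - B)"
    using AB fin K by (simp add: card_Diff_subset)
  then obtain h2 where h2: "bij_betw h2 (K - A) (K - B)"
    using finite_same_card_bij fin by metis
  define \<rho> where "\<rho> x = (if x \<in> A then h1 x else if x \<in> K then h2 x else x)" for x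
  have "bij_betw \<rho> A B"
    using h1 by (rule bij_betw_cong[THEN iffD1, rotated]) (simp add: \<rho>_def)
  moreover have "bij_betw \<rho> (K - A) (K - B)"
    using h2 by (rule bij_betw_cong[THEN iffD1, rotated]) (simp add: \<rho>_def)
  ultimately have "bij_betw \<rho> (A \<union> (K - A)) (B \<union> (K - B))"
    by (rule bij_betw_combine) blast
  then have "bij_betw \<rho> K K"
    using AB by (simp add: Un_absorb1 Un_Diff_cancel)
  then have "\<rho> permutes K"
    by (rule bij_imp_permutes) (use AB in \<open>auto simp: \<rho>_def\<close>)
  moreover have "\<rho> ` A = B"
    using \<open>bij_betw \<rho> A B\<close> by (simp add: bij_betw_def)
  ultimately show thesis by (rule that)
qed

lemma permutes_vimage_subset:
  assumes "\<sigma> permutes K" "B \<subseteq> K"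
  shows "\<sigma> -` B \<subseteq> K" "card (\<sigma> -` B) = card B"
proof -
  show "\<sigma> -` B \<subseteq> K"
    using assms permutes_not_in by fastforce
  have "\<sigma> -` B = inv \<sigma> ` B"
    using permutes_bij[OF assms(1)] by (simp add: bij_vimage_eq_inv_image)
  then show "card (\<sigma> -` B) = card B"
    using permutes_inj[OF permutes_inv[OF assms(1)]] by (simp add: card_image inj_on_subset)
qed

text \<open>Composing with a permutation that moves \<open>T\<close> onto \<open>T'\<close> matches the two fibres.\<close>
lemma card_permutes_vimage_eq:
  assumes K: "finite K" and sub: "T \<subseteq> K" "T' \<subseteq> K" and card: "card T = card T'"
  shows "card {\<sigma>. \<sigma> permutes K \<and> \<sigma> -` B = T} = card {\<sigma>. \<sigma> permutes K \<and> \<sigma> -` B = T'}"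
proof -
  obtain \<rho> where \<rho>: "\<rho> permutes K" "\<rho> ` T = T'"
    using exists_permutes_image[OF K sub card] .
  have vimage: "\<rho> -` T' = T"
    using \<rho> permutes_inj[OF \<rho>(1)] by (auto simp: inj_def)
  have "inv \<rho> -` T = T'"
    using \<rho> permutes_bij[OF \<rho>(1)] by (simp add: bij_vimage_eq_inv_image bij_imp_bij_inv inv_inv_eq)
  have "bij_betw (\<lambda>\<sigma>. \<sigma> \<circ> \<rho>) {\<sigma>. \<sigma> permutes K \<and> \<sigma> -` B = T'} {\<sigma>. \<sigma> permutes K \<and> \<sigma> -` B = T}"
  proof (rule bij_betw_byWitness[where f' = "\<lambda>\<sigma>. \<sigma> \<circ> inv \<rho>"])
    show "\<forall>\<sigma>\<in>{\<sigma>. \<sigma> permutes K \<and> \<sigma> -` B = T'}. \<sigma> \<circ> \<rho> \<circ> inv \<rho> = \<sigma>"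
      "\<forall>\<sigma>\<in>{\<sigma>. \<sigma> permutes K \<and> \<sigma> -` B = T}. \<sigma> \<circ> inv \<rho> \<circ> \<rho> = \<sigma>"
      using permutes_inv_o[OF \<rho>(1)] by (simp_all add: o_assoc[symmetric])
    show "(\<lambda>\<sigma>. \<sigma> \<circ> \<rho>) ` {\<sigma>. \<sigma> permutes K \<and> \<sigma> -` B = T'} \<subseteq> {\<sigma>. \<sigma> permutes K \<and> \<sigma> -` B = T}"
      using \<rho>(1) vimage by (auto simp: vimage_comp[symmetric] intro: permutes_compose)
    show "(\<lambda>\<sigma>. \<sigma> \<circ> inv \<rho>) ` {\<sigma>. \<sigma> permutes K \<and> \<sigma> -` B = T} \<subseteq> {\<sigma>. \<sigma> permutes K \<and> \<sigma> -` B = T'}"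
      using permutes_inv[OF \<rho>(1)] \<open>inv \<rho> -` T = T'\<close>
      by (auto simp: vimage_comp[symmetric] intro: permutes_compose)
  qed
  then show ?thesis
    by (simp add: bij_betw_same_card)
qed

lemma sum_permutes_vimage:
  fixes f :: "'a set \<Rightarrow> 'b::field_char_0"
  assumes K: "finite K" and B: "B \<subseteq> K"
  shows "(\<Sum>\<sigma> | \<sigma> permutes K. f (\<sigma> -` B))
    = fact (card K) / of_nat (card K choose card B) * (\<Sum>T | T \<subseteq> K \<and> card T = card B. f T)"
proof -
  let ?P = "{\<sigma>. \<sigma> permutes K}"
  let ?Sub = "{T. T \<subseteq> K \<and> card T = card B}"
  let ?c = "card {\<sigma>. \<sigma> permutes K \<and> \<sigma> -` B = B}"
  have finP: "finite ?P" using K by (rule finite_permutations)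
  have img: "(\<lambda>\<sigma>. \<sigma> -` B) ` ?P \<subseteq> ?Sub"
    using permutes_vimage_subset[OF _ B] by blast
  have fibre: "card {\<sigma>. \<sigma> permutes K \<and> \<sigma> -` B = T} = ?c" if "T \<in> ?Sub" for T
    using card_permutes_vimage_eq[OF K, of T B] that B by simp
  have group: "(\<Sum>\<sigma>\<in>?P. g (\<sigma> -` B)) = (\<Sum>T\<in>?Sub. of_nat ?c * g T)" for g :: "'a set \<Rightarrow> 'b"
  proof -
    have "(\<Sum>\<sigma>\<in>?P. g (\<sigma> -` B)) = (\<Sum>T\<in>?Sub. \<Sum>\<sigma>\<in>{\<sigma>\<in>?P. \<sigma> -` B = T}. g (\<sigma> -` B))"
      by (rule sum.group[symmetric, OF finP _ img]) (use K in simp)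
    also have "\<dots> = (\<Sum>T\<in>?Sub. of_nat ?c * g T)"
      by (intro sum.cong refl) (simp add: fibre)
    finally show ?thesis .
  qed
  have "fact (card K) = (of_nat (card ?P) :: 'b)"
    using card_permutations[OF refl K] by simp
  also have "\<dots> = (\<Sum>T\<in>?Sub. of_nat ?c)"
    using group[of "\<lambda>_. 1"] by simp
  also have "\<dots> = of_nat (card K choose card B) * of_nat ?c"
    using n_subsets[OF K] by simp
  finally have "of_nat ?c = fact (card K) / (of_nat (card K choose card B) :: 'b)"
    using card_mono[OF K B] by (simp add: field_simps)
  then show ?thesis
    by (simp add: group sum_distrib_left)
qed

lemma concat_perm_eq_reindex_merge:
  assumes "\<sigma> permutes {..<k}"
  shows "concat_perm k n (S, So, \<sigma>)
    = (\<lambda>i\<in>{..<k}. merge {..<k - n} {k - n..<k} (S, \<lambda>j\<in>{k - n..<k}. So (j - (k - n))) (\<sigma> i))"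
  using permutes_in_image[OF assms] by (auto simp: concat_perm_def merge_def fun_eq_iff)

lemma distr_PiM_concat:
  fixes M :: "'a measure" and n k :: nat
  assumes M: "prob_space M" and nk: "n \<le> k"
  shows "distr (PiM {..<k - n} (\<lambda>_. M) \<Otimes>\<^sub>M PiM {..<n} (\<lambda>_. M)) (PiM {..<k} (\<lambda>_. M))
      (\<lambda>z. merge {..<k - n} {k - n..<k} (fst z, \<lambda>j\<in>{k - n..<k}. snd z (j - (k - n))))
    = PiM {..<k} (\<lambda>_. M)"
proof -
  let ?m = "k - n" and ?\<Pi> = "\<lambda>I. PiM I (\<lambda>_. M)"
  let ?shift = "\<lambda>So. \<lambda>j\<in>{?m..<k}. So (j - ?m)"
  let ?P = "?\<Pi> {..<?m} \<Otimes>\<^sub>M ?\<Pi> {..<n}" and ?Q = "?\<Pi> {..<?m} \<Otimes>\<^sub>M ?\<Pi> {?m..<k}"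
  interpret product_sigma_finite "\<lambda>_. M"
    using M by (simp add: product_sigma_finite_def prob_space_imp_sigma_finite)
  interpret shifted: prob_space "?\<Pi> {?m..<k}"
    using M by (intro prob_space_PiM)
  have split: "{..<?m} \<union> {?m..<k} = {..<k}" and disjoint: "{..<?m} \<inter> {?m..<k} = {}"
    by auto
  have m_shift: "?shift \<in> measurable (?\<Pi> {..<n}) (?\<Pi> {?m..<k})"
    using nk by (intro measurable_restrict measurable_component_singleton) auto
  have m_pair: "(\<lambda>z. (fst z, ?shift (snd z))) \<in> measurable ?P ?Q"
    using m_shift by simp
  have "distr (?\<Pi> {..<n}) (?\<Pi> {?m..<k}) ?shift = ?\<Pi> {?m..<k}"
  proof (rule distr_PiM_reindex)
    show "inj_on (\<lambda>j. j - ?m) {?m..<k}"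
      by (rule inj_onI) auto
    show "(\<lambda>j. j - ?m) \<in> {?m..<k} \<rightarrow> {..<n}"
      using nk by auto
  qed (rule M)
  then have pair: "distr ?P ?Q (\<lambda>z. (fst z, ?shift (snd z))) = ?Q"
    using pair_measure_distr[of "\<lambda>S. S" "?\<Pi> {..<?m}" "?\<Pi> {..<?m}", OF _ m_shift]
    by (simp add: split_beta' shifted.sigma_finite_measure_axioms)
  have "distr ?P (?\<Pi> ({..<?m} \<union> {?m..<k})) (\<lambda>z. merge {..<?m} {?m..<k} (fst z, ?shift (snd z)))
      = distr (distr ?P ?Q (\<lambda>z. (fst z, ?shift (snd z)))) (?\<Pi> ({..<?m} \<union> {?m..<k})) (merge {..<?m} {?m..<k})"
    using distr_distr[OF measurable_merge m_pair] by (simp add: comp_def)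
  also have "\<dots> = ?\<Pi> ({..<?m} \<union> {?m..<k})"
    by (simp only: pair distr_merge[OF disjoint finite_lessThan finite_atLeastLessThan])
  finally show ?thesis
    by (simp only: split)
qed

lemma distr_concat_perm_PiM:
  fixes M :: "(real^'d) measure"
  assumes M: "prob_space M" and nk: "n \<le> k" and \<sigma>: "\<sigma> permutes {..<k}"
  shows "distr (PiM {..<k - n} (\<lambda>_. M) \<Otimes>\<^sub>M PiM {..<n} (\<lambda>_. M)) (PiM {..<k} (\<lambda>_. M))
      (\<lambda>z. concat_perm k n (fst z, snd z, \<sigma>)) = PiM {..<k} (\<lambda>_. M)"
proof -
  let ?m = "k - n" and ?\<Pi> = "\<lambda>I. PiM I (\<lambda>_. M)"
  let ?P = "?\<Pi> {..<?m} \<Otimes>\<^sub>M ?\<Pi> {..<n}"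
  let ?concat = "\<lambda>z. merge {..<?m} {?m..<k} (fst z, \<lambda>j\<in>{?m..<k}. snd z (j - ?m))"
  let ?reindex = "\<lambda>\<omega>. \<lambda>i\<in>{..<k}. \<omega> (\<sigma> i)"
  have m_concat: "?concat \<in> measurable ?P (?\<Pi> {..<k})"
  proof -
    have "{..<?m} \<union> {?m..<k} = {..<k}"
      by auto
    then have "merge {..<?m} {?m..<k} \<in> measurable (?\<Pi> {..<?m} \<Otimes>\<^sub>M ?\<Pi> {?m..<k}) (?\<Pi> {..<k})"
      using measurable_merge[of "{..<?m}" "{?m..<k}" "\<lambda>_. M"] by simp
    moreover have "(\<lambda>So. \<lambda>j\<in>{?m..<k}. So (j - ?m)) \<in> measurable (?\<Pi> {..<n}) (?\<Pi> {?m..<k})"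
      using nk by (intro measurable_restrict measurable_component_singleton) auto
    then have "(\<lambda>z. (fst z, \<lambda>j\<in>{?m..<k}. snd z (j - ?m))) \<in> measurable ?P (?\<Pi> {..<?m} \<Otimes>\<^sub>M ?\<Pi> {?m..<k})"
      by simp
    ultimately show ?thesis
      by (rule measurable_compose[rotated])
  qed
  have m_reindex: "?reindex \<in> measurable (?\<Pi> {..<k}) (?\<Pi> {..<k})"
    using permutes_in_image[OF \<sigma>] by (intro measurable_restrict measurable_component_singleton) auto
  have "distr ?P (?\<Pi> {..<k}) (\<lambda>z. concat_perm k n (fst z, snd z, \<sigma>))
      = distr (distr ?P (?\<Pi> {..<k}) ?concat) (?\<Pi> {..<k}) ?reindex"
    by (simp only: distr_distr[OF m_reindex m_concat] comp_def concat_perm_eq_reindex_merge[OF \<sigma>])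
  also have "\<dots> = distr (?\<Pi> {..<k}) (?\<Pi> {..<k}) ?reindex"
    by (simp only: distr_PiM_concat[OF M nk])
  also have "\<dots> = ?\<Pi> {..<k}"
    using permutes_inj_on[OF \<sigma>] permutes_in_image[OF \<sigma>] by (intro distr_PiM_reindex M) auto
  finally show ?thesis .
qed

lemma measurable_concat_perm:
  fixes s t :: "'a \<Rightarrow> nat \<Rightarrow> real^'d"
  assumes s: "s \<in> measurable M (PiM {..<k - n} (\<lambda>_. borel))"
    and t: "t \<in> measurable M (PiM {..<n} (\<lambda>_. borel))"
    and g: "g \<in> measurable M (count_space UNIV)"
  shows "(\<lambda>x. concat_perm k n (s x, t x, g x)) \<in> measurable M (PiM {..<k} (\<lambda>_. borel))"
proof -
  define entry where "entry j x = (if j < k - n then s x j else t x (j - (k - n)))" for j x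
  have entry: "entry j \<in> borel_measurable M" for j
  proof -
    consider "j < k - n" | "\<not> j < k - n" "j - (k - n) < n" | "\<not> j < k - n" "\<not> j - (k - n) < n"
      by blast
    then show ?thesis
    proof cases
      case 1
      then show ?thesis
        using measurable_compose[OF s measurable_component_singleton, of j] by (simp add: entry_def[abs_def])
    next
      case 2
      then show ?thesis
        using measurable_compose[OF t measurable_component_singleton, of "j - (k - n)"]
        by (simp add: entry_def[abs_def])
    next
      case 3
      have "entry j x = undefined" if "x \<in> space M" for x
      proof -
        have "t x \<in> PiE {..<n} (\<lambda>_. space borel)"
          using measurable_space[OF t that] by (simp add: space_PiM)
        then show ?thesis
          using PiE_arb[of "t x" "{..<n}" _ "j - (k - n)"] 3 by (simp add: entry_def)
      qed
      then show ?thesis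
        using measurable_cong[of M "entry j" "\<lambda>_. undefined"] by simp
    qed
  qed
  have "(\<lambda>x. \<lambda>i\<in>{..<k}. entry (g x i) x) \<in> measurable M (PiM {..<k} (\<lambda>_. borel))"
  proof (rule measurable_restrict)
    fix i
    have "(\<lambda>x. g x i) \<in> measurable M (count_space UNIV)"
      by (rule measurable_compose[OF g]) simp
    then show "(\<lambda>x. entry (g x i) x) \<in> borel_measurable M"
      by (rule measurable_compose_countable[OF entry])
  qed
  then show ?thesis
    by (simp add: concat_perm_def entry_def Let_def)
qed

lemma borel_measurable_det_scatter:
  assumes "T \<subseteq> I"
  shows "(\<lambda>w. det (scatter T w)) \<in> borel_measurable (PiM I (\<lambda>_. borel :: (real^'d) measure))"
proof -
  have entry: "(\<lambda>w. w i $ r) \<in> borel_measurable (PiM I (\<lambda>_. borel :: (real^'d) measure))"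
    if "i \<in> I" for i r
    by (rule measurable_compose[OF measurable_component_singleton[OF that]])
      (intro borel_measurable_continuous_onI continuous_on_component continuous_on_id)
  have "det (scatter T w) = (\<Sum>p | p permutes (UNIV :: 'd set).
      of_int (sign p) * (\<Prod>r\<in>UNIV. \<Sum>i\<in>T. w i $ r * w i $ p r))" for w
    by (simp add: det_def scatter_def outer_def sum_component)
  then show ?thesis
    using assms entry by (simp only:) (intro borel_measurable_sum borel_measurable_prod
        borel_measurable_times borel_measurable_const; auto)
qed

lemma nn_integral_pair_pmf_of_set:
  fixes f :: "'a \<times> 'b \<times> 'c \<Rightarrow> ennreal"
  assumes M1: "sigma_finite_measure M1" and M2: "sigma_finite_measure M2"
    and P: "finite P" "P \<noteq> {}"
    and f: "f \<in> borel_measurable (M1 \<Otimes>\<^sub>M (M2 \<Otimes>\<^sub>M measure_pmf (pmf_of_set P)))"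
  shows "(\<integral>\<^sup>+z. f z \<partial>(M1 \<Otimes>\<^sub>M (M2 \<Otimes>\<^sub>M measure_pmf (pmf_of_set P))))
    = (\<Sum>\<sigma>\<in>P. \<integral>\<^sup>+z. f (fst z, snd z, \<sigma>) \<partial>(M1 \<Otimes>\<^sub>M M2)) / card P"
proof -
  let ?U = "measure_pmf (pmf_of_set P)"
  interpret M2: sigma_finite_measure M2 by (rule M2)
  have U: "sigma_finite_measure ?U"
    by (rule prob_space_imp_sigma_finite) (rule prob_space_measure_pmf)
  interpret M2U: sigma_finite_measure "M2 \<Otimes>\<^sub>M ?U"
    by (rule sigma_finite_pair_measure[OF M2 U])
  have slice: "(\<lambda>z. f (fst z, snd z, \<sigma>)) \<in> borel_measurable (M1 \<Otimes>\<^sub>M M2)" for \<sigma>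
    by (rule measurable_compose[OF _ f]) simp
  have "(\<integral>\<^sup>+z. f z \<partial>(M1 \<Otimes>\<^sub>M (M2 \<Otimes>\<^sub>M ?U))) = (\<integral>\<^sup>+x. \<integral>\<^sup>+q. f (x, q) \<partial>(M2 \<Otimes>\<^sub>M ?U) \<partial>M1)"
    by (rule M2U.nn_integral_fst[OF f, symmetric])
  also have "\<dots> = (\<integral>\<^sup>+x. \<integral>\<^sup>+y. (\<Sum>\<sigma>\<in>P. f (x, y, \<sigma>)) / card P \<partial>M2 \<partial>M1)"
  proof (rule nn_integral_cong)
    fix x assume "x \<in> space M1"
    then have "(\<integral>\<^sup>+q. f (x, q) \<partial>(M2 \<Otimes>\<^sub>M ?U)) = (\<integral>\<^sup>+y. \<integral>\<^sup>+\<sigma>. f (x, y, \<sigma>) \<partial>?U \<partial>M2)"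
      using sigma_finite_measure.nn_integral_fst[OF U measurable_Pair2[OF f]] by simp
    then show "(\<integral>\<^sup>+q. f (x, q) \<partial>(M2 \<Otimes>\<^sub>M ?U)) = (\<integral>\<^sup>+y. (\<Sum>\<sigma>\<in>P. f (x, y, \<sigma>)) / card P \<partial>M2)"
      using P by (simp add: nn_integral_pmf_of_set)
  qed
  also have "\<dots> = (\<integral>\<^sup>+z. (\<Sum>\<sigma>\<in>P. f (fst z, snd z, \<sigma>)) / card P \<partial>(M1 \<Otimes>\<^sub>M M2))"
    using M2.nn_integral_fst[of "\<lambda>z. (\<Sum>\<sigma>\<in>P. f (fst z, snd z, \<sigma>)) / card P" M1] slice by simp
  also have "\<dots> = (\<Sum>\<sigma>\<in>P. \<integral>\<^sup>+z. f (fst z, snd z, \<sigma>) \<partial>(M1 \<Otimes>\<^sub>M M2)) / card P"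
    using slice by (simp add: nn_integral_divide nn_integral_sum)
  finally show ?thesis .
qed

lemma emeasure_distr_pair_pmf_of_set:
  assumes M1: "sigma_finite_measure M1" and M2: "sigma_finite_measure M2"
    and P: "finite P" "P \<noteq> {}"
    and f: "f \<in> measurable (M1 \<Otimes>\<^sub>M (M2 \<Otimes>\<^sub>M measure_pmf (pmf_of_set P))) N" and A: "A \<in> sets N"
  shows "emeasure (distr (M1 \<Otimes>\<^sub>M (M2 \<Otimes>\<^sub>M measure_pmf (pmf_of_set P))) N f) A
    = (\<Sum>\<sigma>\<in>P. emeasure (distr (M1 \<Otimes>\<^sub>M M2) N (\<lambda>z. f (fst z, snd z, \<sigma>))) A) / card P"
proof -
  have slice: "(\<lambda>z. f (fst z, snd z, \<sigma>)) \<in> measurable (M1 \<Otimes>\<^sub>M M2) N" for \<sigma>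
    by (rule measurable_compose[OF _ f]) simp
  have "emeasure (distr (M1 \<Otimes>\<^sub>M (M2 \<Otimes>\<^sub>M measure_pmf (pmf_of_set P))) N f) A
      = (\<integral>\<^sup>+z. indicator A (f z) \<partial>(M1 \<Otimes>\<^sub>M (M2 \<Otimes>\<^sub>M measure_pmf (pmf_of_set P))))"
    using f A by (simp add: nn_integral_distr[symmetric])
  also have "\<dots> = (\<Sum>\<sigma>\<in>P. \<integral>\<^sup>+z. indicator A (f (fst z, snd z, \<sigma>)) \<partial>(M1 \<Otimes>\<^sub>M M2)) / card P"
    using f A by (intro nn_integral_pair_pmf_of_set M1 M2 P) simp
  also have "\<dots> = (\<Sum>\<sigma>\<in>P. emeasure (distr (M1 \<Otimes>\<^sub>M M2) N (\<lambda>z. f (fst z, snd z, \<sigma>))) A) / card P"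
  proof -
    have "emeasure (distr (M1 \<Otimes>\<^sub>M M2) N (\<lambda>z. f (fst z, snd z, \<sigma>))) A
        = (\<integral>\<^sup>+z. indicator A (f (fst z, snd z, \<sigma>)) \<partial>(M1 \<Otimes>\<^sub>M M2))" for \<sigma>
      using nn_integral_distr[OF slice[of \<sigma>], of "indicator A"] A by simp
    then show ?thesis
      by simp
  qed
  finally show ?thesis .
qed

lemma emeasure_density_sum_divide:
  assumes "finite P" and w: "\<And>\<sigma>. \<sigma> \<in> P \<Longrightarrow> w \<sigma> \<in> borel_measurable M" and A: "A \<in> sets M"
  shows "(\<Sum>\<sigma>\<in>P. emeasure (density M (w \<sigma>)) A) / c = emeasure (density M (\<lambda>x. (\<Sum>\<sigma>\<in>P. w \<sigma> x) / c)) A"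
proof -
  have wA: "(\<lambda>x. w \<sigma> x * indicator A x) \<in> borel_measurable M" if "\<sigma> \<in> P" for \<sigma>
    using w[OF that] A by (intro borel_measurable_times_ennreal borel_measurable_indicator)
  then have sum: "(\<lambda>x. (\<Sum>\<sigma>\<in>P. w \<sigma> x) * indicator A x) \<in> borel_measurable M"
    by (simp add: sum_distrib_right borel_measurable_sum)
  have "(\<Sum>\<sigma>\<in>P. emeasure (density M (w \<sigma>)) A) = (\<integral>\<^sup>+x. (\<Sum>\<sigma>\<in>P. w \<sigma> x) * indicator A x \<partial>M)"
    using w A by (simp add: emeasure_density sum_distrib_right nn_integral_sum[OF wA])
  also have "\<dots> / c = (\<integral>\<^sup>+x. (\<Sum>\<sigma>\<in>P. w \<sigma> x) * indicator A x / c \<partial>M)"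
    by (rule nn_integral_divide[OF sum, symmetric])
  also have "\<dots> = emeasure (density M (\<lambda>x. (\<Sum>\<sigma>\<in>P. w \<sigma> x) / c)) A"
    using w A by (simp add: emeasure_density divide_ennreal_def mult_ac)
  finally show ?thesis .
qed

lemma sets_iid:
  assumes "sets D = sets borel"
  shows "sets (iid D n) = sets (PiM {..<n} (\<lambda>_. borel))"
  unfolding iid_def by (rule sets_PiM_cong) (simp_all add: assms)

lemma prob_space_iid: "prob_space D \<Longrightarrow> prob_space (iid D n)"
  unfolding iid_def by (rule prob_space_PiM)

definition VS_weight :: "(real^'d) measure \<Rightarrow> nat \<Rightarrow> nat set \<Rightarrow> (nat \<Rightarrow> real^'d) \<Rightarrow> ennreal" where
  "VS_weight D n T w =
    ennreal (det (scatter T w) / (fact CARD('d) * real (n choose CARD('d)) * det (second_moment D)))"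

lemma VS_eq_density: "VS D n = density (iid D n) (VS_weight D n {..<n})"
  by (simp add: VS_def VS_weight_def[abs_def] scatter_def)

lemma borel_measurable_VS_weight:
  assumes "sets D = sets borel" "T \<subseteq> {..<k}"
  shows "VS_weight D n T \<in> borel_measurable (iid D k)"
  unfolding VS_weight_def measurable_cong_sets[OF sets_iid[OF assms(1)] refl]
  by (intro measurable_compose[OF _ measurable_ennreal] borel_measurable_divide
      borel_measurable_const borel_measurable_det_scatter assms(2))

lemma sets_VS:
  assumes "sets D = sets borel"
  shows "sets (VS D n) = sets (PiM {..<n} (\<lambda>_. borel))"
  using sets_iid[OF assms] by (simp add: VS_def)

lemma sigma_finite_VS:
  assumes "prob_space D" "sets D = sets borel"
  shows "sigma_finite_measure (VS D n)"
proof -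
  interpret sigma_finite_measure "iid D n"
    by (rule prob_space_imp_sigma_finite[OF prob_space_iid[OF assms(1)]])
  show ?thesis
    unfolding VS_eq_density
    by (subst sigma_finite_iff_density_finite) (simp_all add: borel_measurable_VS_weight assms VS_weight_def)
qed

lemma ennreal_fact: "ennreal (fact n) = fact n"
  by (metis ennreal_of_nat_eq_real_of_nat of_nat_fact)

lemma sum_ennreal_divide:
  assumes "\<And>i. i \<in> I \<Longrightarrow> 0 \<le> a i"
  shows "(\<Sum>i\<in>I. ennreal (a i / c)) = ennreal ((\<Sum>i\<in>I. a i) / c)"
  using assms by (simp add: divide_inverse ennreal_mult' sum_nonneg sum_distrib_right[symmetric])

lemma sum_VS_weight_permutes:
  fixes D :: "(real^'d) measure"
  assumes dk: "CARD('d) \<le> k"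
  shows "(\<Sum>\<sigma> | \<sigma> permutes {..<k}. VS_weight D CARD('d) (\<sigma> -` {k - CARD('d)..<k}) w) / fact k
    = VS_weight D k {..<k} w"
proof -
  let ?d = "CARD('d)" and ?B = "{k - CARD('d)..<k}"
  let ?c = "fact ?d * det (second_moment D)"
  have B: "?B \<subseteq> {..<k}"
    by auto
  have nonneg: "0 \<le> det (scatter (\<sigma> -` ?B) w)" if "\<sigma> permutes {..<k}" for \<sigma>
  proof -
    have "\<sigma> -` ?B \<subseteq> {..<k}"
      using that by (intro permutes_vimage_subset(1)) auto
    then show ?thesis
      by (intro det_scatter_nonneg) (rule finite_subset, auto)
  qed
  have "(\<Sum>\<sigma> | \<sigma> permutes {..<k}. VS_weight D ?d (\<sigma> -` ?B) w)
      = ennreal ((\<Sum>\<sigma> | \<sigma> permutes {..<k}. det (scatter (\<sigma> -` ?B) w)) / ?c)"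
    unfolding VS_weight_def by simp (rule sum_ennreal_divide, simp add: nonneg)
  also have "(\<Sum>\<sigma> | \<sigma> permutes {..<k}. det (scatter (\<sigma> -` ?B) w))
      = fact k / real (k choose ?d) * det (scatter {..<k} w)"
    using sum_permutes_vimage[OF finite_lessThan B, of "\<lambda>T. det (scatter T w)"] dk
    by (simp add: cauchy_binet_scatter)
  also have "fact k / real (k choose ?d) * det (scatter {..<k} w) / ?c
      = fact k * (det (scatter {..<k} w) / (fact ?d * real (k choose ?d) * det (second_moment D)))"
    by (simp add: field_simps)
  also have "ennreal \<dots> = fact k * VS_weight D k {..<k} w"
    by (simp only: VS_weight_def ennreal_mult'[OF fact_ge_zero] ennreal_fact)
  finally have "(\<Sum>\<sigma> | \<sigma> permutes {..<k}. VS_weight D ?d (\<sigma> -` ?B) w) = fact k * VS_weight D k {..<k} w" .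
  moreover have "(fact k :: ennreal) \<noteq> 0" "(fact k :: ennreal) \<noteq> top"
    by (simp_all flip: ennreal_fact)
  ultimately show ?thesis
    by (simp add: mult.commute[of "fact k"] ennreal_mult_divide_eq)
qed

lemma scatter_concat_perm:
  assumes \<sigma>: "\<sigma> permutes {..<k}" and nk: "n \<le> k"
  shows "scatter (\<sigma> -` {k - n..<k}) (concat_perm k n (S, So, \<sigma>)) = scatter {..<n} So"
proof -
  let ?m = "k - n"
  have inv: "\<sigma> (inv \<sigma> j) = j" "inv \<sigma> (\<sigma> i) = i" for i j
    using permutes_inverses[OF \<sigma>] by simp_all
  have lt: "\<sigma> i < k \<longleftrightarrow> i < k" for i
    using permutes_in_image[OF \<sigma>] by simp
  have "scatter (\<sigma> -` {?m..<k}) (concat_perm k n (S, So, \<sigma>)) = (\<Sum>i\<in>\<sigma> -` {?m..<k}. outer (So (\<sigma> i - ?m)))"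
    unfolding scatter_def using lt by (intro sum.cong) (auto simp: concat_perm_def)
  also have "\<dots> = scatter {..<n} So"
    unfolding scatter_def
    by (rule sum.reindex_bij_witness[where i = "\<lambda>j. inv \<sigma> (j + ?m)" and j = "\<lambda>i. \<sigma> i - ?m"])
      (use nk in \<open>auto simp: inv\<close>)
  finally show ?thesis .
qed

lemma distr_concat_perm_VS:
  fixes D :: "(real^'d) measure"
  assumes D: "prob_space D" "sets D = sets borel" and nk: "n \<le> k" and \<sigma>: "\<sigma> permutes {..<k}"
  shows "distr (iid D (k - n) \<Otimes>\<^sub>M VS D n) (PiM {..<k} (\<lambda>_. borel)) (\<lambda>z. concat_perm k n (fst z, snd z, \<sigma>))
    = density (iid D k) (VS_weight D n (\<sigma> -` {k - n..<k}))"
proof -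
  let ?P = "iid D (k - n) \<Otimes>\<^sub>M iid D n" and ?\<Psi> = "\<lambda>z. concat_perm k n (fst z, snd z, \<sigma>)"
  let ?w = "VS_weight D n (\<sigma> -` {k - n..<k})"
  have sets: "sets (iid D j) = sets (PiM {..<j} (\<lambda>_. borel))" for j
    by (rule sets_iid[OF D(2)])
  have \<Psi>: "?\<Psi> \<in> measurable ?P (iid D k)"
    unfolding measurable_cong_sets[OF refl sets]
    by (rule measurable_concat_perm)
      (simp_all add: measurable_cong_sets[OF refl sets, symmetric])
  have "\<sigma> -` {k - n..<k} \<subseteq> {..<k}"
    by (rule permutes_vimage_subset(1)[OF \<sigma>]) auto
  then have w: "?w \<in> borel_measurable (iid D k)"
    by (rule borel_measurable_VS_weight[OF D(2)])
  have "iid D (k - n) \<Otimes>\<^sub>M VS D n = density ?P (\<lambda>(S, So). 1 * VS_weight D n {..<n} So)"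
    unfolding VS_eq_density
    by (subst density_1[symmetric], rule pair_measure_density)
      (auto intro: borel_measurable_VS_weight[OF D(2) order.refl] prob_space_imp_sigma_finite prob_space_iid D(1)
        sigma_finite_VS[OF D, unfolded VS_eq_density])
  also have "\<dots> = density ?P (\<lambda>z. ?w (?\<Psi> z))"
    by (rule arg_cong[where f = "density ?P"]) (simp add: fun_eq_iff VS_weight_def scatter_concat_perm[OF \<sigma> nk])
  finally have "distr (iid D (k - n) \<Otimes>\<^sub>M VS D n) (PiM {..<k} (\<lambda>_. borel)) ?\<Psi>
      = distr (density ?P (\<lambda>z. ?w (?\<Psi> z))) (iid D k) ?\<Psi>"
    by (intro distr_cong) (simp_all add: sets)
  also have "\<dots> = density (distr ?P (iid D k) ?\<Psi>) ?w"
    by (rule density_distr[OF w \<Psi>, symmetric])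
  also have "distr ?P (iid D k) ?\<Psi> = iid D k"
    unfolding iid_def by (rule distr_concat_perm_PiM[OF D(1) nk \<sigma>])
  finally show ?thesis .
qed

lemma measurable_concat_perm_iid_VS:
  assumes "sets D = sets borel"
  shows "concat_perm k n \<in> measurable (iid D (k - n) \<Otimes>\<^sub>M (VS D n \<Otimes>\<^sub>M unif_perm k)) (PiM {..<k} (\<lambda>_. borel))"
proof -
  let ?P = "iid D (k - n) \<Otimes>\<^sub>M (VS D n \<Otimes>\<^sub>M unif_perm k)"
  have "(\<lambda>x. concat_perm k n (fst x, fst (snd x), snd (snd x))) \<in> measurable ?P (PiM {..<k} (\<lambda>_. borel))"
  proof (rule measurable_concat_perm)
    show "fst \<in> measurable ?P (PiM {..<k - n} (\<lambda>_. borel))"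
      using measurable_fst[of "iid D (k - n)"] by (simp only: measurable_cong_sets[OF refl sets_iid[OF assms]])
    show "(\<lambda>x. fst (snd x)) \<in> measurable ?P (PiM {..<n} (\<lambda>_. borel))"
      using measurable_compose[OF measurable_snd[of "iid D (k - n)"] measurable_fst[of "VS D n" "unif_perm k"]]
      by (simp only: measurable_cong_sets[OF refl sets_VS[OF assms]])
    show "(\<lambda>x. snd (snd x)) \<in> measurable ?P (count_space UNIV)"
      using measurable_compose[OF measurable_snd measurable_snd] by (simp add: unif_perm_def)
  qed
  then show ?thesis
    by simp
qed

theorem theorem1:
  fixes D :: "(real^'d) measure" and k :: nat
  assumes "prob_space D"
    and "sets D = sets borel"
    and "integrable D (\<lambda>x. norm x ^ 2)"
    and "invertible (second_moment D)"
    and "k \<ge> CARD('d)"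
  shows "distr (iid D (k - CARD('d)) \<Otimes>\<^sub>M (VS D CARD('d) \<Otimes>\<^sub>M unif_perm k))
            (PiM {..<k} (\<lambda>_. borel)) (concat_perm k CARD('d))
         = VS D k"
proof (rule measure_eqI)
  note D = assms(1,2) and dk = assms(5)
  let ?d = "CARD('d)" and ?N = "PiM {..<k} (\<lambda>_. borel) :: (nat \<Rightarrow> real^'d) measure"
  let ?P = "iid D (k - ?d) \<Otimes>\<^sub>M (VS D ?d \<Otimes>\<^sub>M unif_perm k)"
  let ?Perms = "{\<sigma>. \<sigma> permutes {..<k}}" and ?w = "\<lambda>\<sigma>. VS_weight D ?d (\<sigma> -` {k - ?d..<k})"
  show "sets (distr ?P ?N (concat_perm k ?d)) = sets (VS D k)"
    by (simp add: sets_VS D(2))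
  have w: "?w \<sigma> \<in> borel_measurable (iid D k)" if "\<sigma> \<in> ?Perms" for \<sigma>
    using that by (intro borel_measurable_VS_weight D(2) permutes_vimage_subset(1)) auto
  fix A assume "A \<in> sets (distr ?P ?N (concat_perm k ?d))"
  then have A: "A \<in> sets ?N" "A \<in> sets (iid D k)"
    using sets_iid[OF D(2)] by simp_all
  have "emeasure (distr ?P ?N (concat_perm k ?d)) A
      = (\<Sum>\<sigma>\<in>?Perms. emeasure (density (iid D k) (?w \<sigma>)) A) / fact k"
    using emeasure_distr_pair_pmf_of_set[OF prob_space_imp_sigma_finite[OF prob_space_iid[OF D(1)]]
        sigma_finite_VS[OF D] _ _ measurable_concat_perm_iid_VS[OF D(2), of k ?d, unfolded unif_perm_def] A(1)]
    by (simp add: unif_perm_def distr_concat_perm_VS[OF D dk] card_permutations finite_permutations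
        exI[of _ id])
  also have "\<dots> = emeasure (density (iid D k) (\<lambda>w. (\<Sum>\<sigma>\<in>?Perms. ?w \<sigma> w) / fact k)) A"
    using w A(2) by (intro emeasure_density_sum_divide) (auto simp: finite_permutations)
  also have "\<dots> = emeasure (VS D k) A"
    by (simp add: sum_VS_weight_permutes[OF dk] VS_eq_density)
  finally show "emeasure (distr ?P ?N (concat_perm k ?d)) A = emeasure (VS D k) A" .
qed

end
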